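(* Let $N, M \ge 1$ be integers, let $t_1,\ldots,t_N$ be real time points and $f_1,\ldots,f_M$ real frequencies, and let $B\in\mathbb{C}^{N\times M}$ have entries $B_{k,m}=\exp(-i2\pi f_m t_k)$. Let $A=\left[\mathbf{1}_N\ \ \mathrm{Re}(B)\ \ \mathrm{Im}(B)\right]\in\mathbb{R}^{N\times(2M+1)}$, where $\mathbf{1}_N$ is the all-ones column vector. Let $\sigma^2>0$, let $\alpha_0,\alpha_1,\ldots,\alpha_M>0$, and let $\Gamma=\mathrm{diag}(\alpha_0,\alpha_1,\ldots,\alpha_M,\alpha_1,\ldots,\alpha_M)$. Let $\Omega=\{1,\ldots,N\}$. For $J\subseteq\Omega$ let $P_J\in\mathbb{R}^{N\times N}$ be the diagonal matrix with $(P_J)_{kk}=1$ if $k\in J$ and $0$ otherwise, and define the set function $f:2^\Omega\to\mathbb{R}$ by $$f(J)=\mathrm{tr}\left(\sigma^2 I_N + A\Gamma A^T\right)-\mathrm{tr}\left(\sigma^2 I_N + A\left(\tfrac{1}{\sigma^2}A^TP_JA+\Gamma^{-1}\right)^{-1}A^T\right).$$ Then $f$ is a weakly submodular set function; that is, $f$ is monotone non-decreasing (i.e. $f(\mathcal{X})\le f(\mathcal{Y})$ whenever $\mathcal{X}\subseteq\mathcal{Y}\subseteq\Omega$) and its weak-submodularity constant $$c_f=\max_{(\mathcal{X},\mathcal{Y},i)\in\tilde\Omega} \frac{f_i(\mathcal{Y})}{f_i(\mathcal{X})},\qquad \tilde\Omega=\{(\mathcal{X},\mathcal{Y},i): \mathcal{X}\subseteq\mathcal{Y}\subset\Omega,\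 i\in\Omega\setminus\mathcal{Y}\},$$ is bounded (a finite real number), where $f_i(\mathcal{X})=f(\mathcal{X}\cup\{i\})-f(\mathcal{X})$.
   Context: $\mathrm{Re}(B)$ and $\mathrm{Im}(B)$ denote entrywise real and imaginary parts, and $\mathrm{tr}$ is the matrix trace. $2^\Omega$ denotes the power set of $\Omega$. The marginal gain of adding $j$ to $\mathcal{X}$ is $f_j(\mathcal{X})=f(\mathcal{X}\cup\{j\})-f(\mathcal{X})$. A monotone non-decreasing set function $f$ is called weakly submodular if its weak-submodularity constant $c_f$ (defined as in the claim) is bounded; it is submodular iff $c_f\le 1$. *)

theory Defs
  imports "HOL-Analysis.Analysis"
begin

text \<open>Time points t indexed by the finite type 'n (N = CARD('n)), frequencies f indexed by
  the finite type 'm (M = CARD('m)). Columns of A are indexed by unit + ('m + 'm):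
  Inl () is the all-ones column, Inr (Inl m) the Re(B) column m, Inr (Inr m) the Im(B) column m.\<close>

definition Bmat :: "('n::finite \<Rightarrow> real) \<Rightarrow> ('m::finite \<Rightarrow> real) \<Rightarrow> complex^'m^'n" where
  "Bmat t fr = (\<chi> k m. exp (- (\<i> * complex_of_real (2 * pi * fr m * t k))))"

definition Amat :: "('n::finite \<Rightarrow> real) \<Rightarrow> ('m::finite \<Rightarrow> real) \<Rightarrow> real^(unit + ('m + 'm))^'n" where
  "Amat t fr = (\<chi> k c. (case c of Inl _ \<Rightarrow> 1
                               | Inr (Inl m) \<Rightarrow> Re (Bmat t fr $ k $ m)
                               | Inr (Inr m) \<Rightarrow> Im (Bmat t fr $ k $ m)))"

definition Gamma :: "real \<Rightarrow> ('m::finite \<Rightarrow> real) \<Rightarrow> real^(unit + ('m + 'm))^(unit + ('m + 'm))" where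
  "Gamma \<alpha>0 \<alpha> = (\<chi> c d. if c = d then (case c of Inl _ \<Rightarrow> \<alpha>0
                                              | Inr (Inl m) \<Rightarrow> \<alpha> m
                                              | Inr (Inr m) \<Rightarrow> \<alpha> m) else 0)"

definition Pmat :: "'n::finite set \<Rightarrow> real^'n^'n" where
  "Pmat J = (\<chi> k l. if k = l \<and> k \<in> J then 1 else 0)"

definition fobj :: "('n::finite \<Rightarrow> real) \<Rightarrow> ('m::finite \<Rightarrow> real) \<Rightarrow> real \<Rightarrow> real \<Rightarrow> ('m \<Rightarrow> real)
                    \<Rightarrow> 'n set \<Rightarrow> real" where
  "fobj t fr \<sigma>2 \<alpha>0 \<alpha> J =
     trace (\<sigma>2 *\<^sub>R mat 1 + Amat t fr ** Gamma \<alpha>0 \<alpha> ** transpose (Amat t fr))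
   - trace (\<sigma>2 *\<^sub>R mat 1 + Amat t fr **
        matrix_inv ((1 / \<sigma>2) *\<^sub>R (transpose (Amat t fr) ** Pmat J ** Amat t fr)
                    + matrix_inv (Gamma \<alpha>0 \<alpha>)) ** transpose (Amat t fr))"

definition marginal :: "('a set \<Rightarrow> real) \<Rightarrow> 'a \<Rightarrow> 'a set \<Rightarrow> real" where
  "marginal f j X = f (X \<union> {j}) - f X"

definition wsm_triples :: "'a set \<Rightarrow> ('a set \<times> 'a set \<times> 'a) set" where
  "wsm_triples \<Omega> = {(X, Y, i). X \<subseteq> Y \<and> Y \<subset> \<Omega> \<and> i \<in> \<Omega> - Y}"

text \<open>Weakly submodular: monotone non-decreasing on subsets of \<Omega>, and the constant
  c_f = max over triples of f_i(Y)/f_i(X) is a finite real number, i.e. every ratio is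
  defined (denominator nonzero) and the ratios are bounded above.\<close>
definition weakly_submodular :: "'a set \<Rightarrow> ('a set \<Rightarrow> real) \<Rightarrow> bool" where
  "weakly_submodular \<Omega> f \<longleftrightarrow>
     (\<forall>X Y. X \<subseteq> Y \<and> Y \<subseteq> \<Omega> \<longrightarrow> f X \<le> f Y)
   \<and> (\<forall>(X, Y, i) \<in> wsm_triples \<Omega>. marginal f i X \<noteq> 0)
   \<and> (\<exists>c::real. \<forall>(X, Y, i) \<in> wsm_triples \<Omega>. marginal f i Y / marginal f i X \<le> c)"

end

theory Submission
  imports Defs
begin

text \<open>Write \<open>M\<^sub>J = A\<^sup>T P\<^sub>J A / \<sigma>\<^sup>2 + \<Gamma>\<^sup>-\<^sup>1\<close> for the posterior precision and
  \<open>S\<^sub>J = M\<^sub>J\<^sup>-\<^sup>1\<close>, so that \<open>f(J) = const - tr(A S\<^sub>J A\<^sup>T)\<close>. Adding a time point \<open>i \<notin> J\<close>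
  adds the rank-one term \<open>a a\<^sup>T / \<sigma>\<^sup>2\<close> to \<open>M\<^sub>J\<close>, where \<open>a\<close> is the \<open>i\<close>-th row of \<open>A\<close>.
  By the Sherman-Morrison formula \<open>S\<^sub>J\<close> then decreases by \<open>w w\<^sup>T / (\<sigma>\<^sup>2 + a\<^sup>T w)\<close> with
  \<open>w = S\<^sub>J a\<close>, so the marginal gain of \<open>f\<close> is \<open>\<parallel>A w\<parallel>\<^sup>2 / (\<sigma>\<^sup>2 + a\<^sup>T w)\<close>. This is strictly
  positive: \<open>S\<^sub>J\<close> is positive definite and \<open>a \<noteq> 0\<close> (its first entry is 1), so the
  \<open>i\<close>-th entry \<open>a\<^sup>T w\<close> of \<open>A w\<close> is positive. Strictly positive marginal gains on a
  finite ground set make \<open>f\<close> monotone and \<open>c\<^sub>f\<close> a maximum of finitely many ratios.\<close>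

lemma matrix_mul_matrix_inv:
  fixes A :: "'a::field^'n^'n"
  assumes "invertible A"
  shows "A ** matrix_inv A = mat 1"
  using assms unfolding invertible_def matrix_inv_def by (rule someI2_ex) blast

lemma matrix_inv_eqI:
  fixes A B :: "'a::field^'n^'n"
  assumes "A ** B = mat 1"
  shows "matrix_inv A = B"
proof -
  have "invertible A" using assms invertible_right_inverse by blast
  then have "matrix_inv A ** A = mat 1"
    using matrix_mul_matrix_inv matrix_left_right_inverse by blast
  then have "matrix_inv A = matrix_inv A ** (A ** B)"
    using assms by simp
  also have "\<dots> = B"
    using \<open>matrix_inv A ** A = mat 1\<close> by (simp add: matrix_mul_assoc)
  finally show ?thesis .
qed

lemma matrix_add_rdistrib: "(A + B) ** C = A ** C + B ** (C :: 'a::semiring_1^_^_)"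
  by (vector matrix_matrix_mult_def sum.distrib[symmetric] distrib_right)

lemma matrix_diff_ldistrib: "A ** (B - C) = A ** B - A ** (C :: 'a::ring_1^_^_)"
  by (vector matrix_matrix_mult_def sum_subtractf[symmetric] right_diff_distrib)

lemma matrix_diff_rdistrib: "(A - B) ** C = A ** C - B ** (C :: 'a::ring_1^_^_)"
  by (vector matrix_matrix_mult_def sum_subtractf[symmetric] left_diff_distrib)

lemma matrix_mul_scaleR_right: "A ** (k *\<^sub>R B) = k *\<^sub>R (A ** B :: real^_^_)"
  by (simp add: matrix_scalar_ac scalar_matrix_assoc)

lemma transpose_add: "transpose (A + B) = transpose A + transpose B"
  by (simp add: vec_eq_iff transpose_def)

lemma transpose_matrix_inv_symmetric:
  fixes M :: "'a::field^'n^'n"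
  assumes "transpose M = M" and "invertible M"
  shows "transpose (matrix_inv M) = matrix_inv M"
proof -
  have "matrix_inv M ** M = mat 1"
    using assms(2) matrix_mul_matrix_inv matrix_left_right_inverse by blast
  then have "M ** transpose (matrix_inv M) = mat 1"
    by (metis assms(1) matrix_transpose_mul transpose_mat)
  then show ?thesis by (rule matrix_inv_eqI [symmetric])
qed

subsection \<open>Outer products\<close>

definition outer_prod :: "real^'m \<Rightarrow> real^'n \<Rightarrow> real^'n^'m" where
  "outer_prod u v = (\<chi> p q. u $ p * v $ q)"

lemma matrix_mul_outer_prod: "M ** outer_prod u v = outer_prod (M *v u) v"
  by (simp add: vec_eq_iff outer_prod_def matrix_matrix_mult_def matrix_vector_mult_def
      sum_distrib_left mult_ac)

lemma outer_prod_matrix_mul: "outer_prod u v ** M = outer_prod u (v v* M)"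
  by (simp add: vec_eq_iff outer_prod_def matrix_matrix_mult_def vector_matrix_mult_def
      sum_distrib_left mult_ac)

lemma outer_prod_mult_outer_prod: "outer_prod u v ** outer_prod w z = (v \<bullet> w) *\<^sub>R outer_prod u z"
  by (simp add: vec_eq_iff outer_prod_def matrix_matrix_mult_def inner_vec_def
      sum_distrib_left sum_distrib_right mult_ac)

lemma outer_prod_scaleR_right: "outer_prod u (c *\<^sub>R v) = c *\<^sub>R outer_prod u v"
  by (simp add: vec_eq_iff outer_prod_def mult_ac)

lemma trace_outer_prod: "trace (outer_prod u v) = u \<bullet> v"
  by (simp add: trace_def outer_prod_def inner_vec_def)

lemma trace_congruence_outer_prod:
  "trace (A ** outer_prod u v ** transpose A) = (A *v u) \<bullet> (A *v v)"
  by (simp add: matrix_mul_outer_prod outer_prod_matrix_mul trace_outer_prod)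

lemma trace_scaleR: "trace ((c::real) *\<^sub>R (A::real^'n^'n)) = c * trace A"
  by (simp add: trace_def sum_distrib_left)

lemma matrix_inv_add_outer_prod:
  fixes M S :: "real^'n^'n"
  assumes inverse: "M ** S = mat 1" and nonsingular: "1 + v \<bullet> (S *v u) \<noteq> 0"
  shows "matrix_inv (M + outer_prod u v)
       = S - (1 / (1 + v \<bullet> (S *v u))) *\<^sub>R outer_prod (S *v u) (v v* S)"
proof (rule matrix_inv_eqI)
  define c where "c = 1 / (1 + v \<bullet> (S *v u))"
  have "M ** outer_prod (S *v u) (v v* S) = outer_prod u (v v* S)"
    by (simp add: matrix_mul_outer_prod matrix_vector_mul_assoc inverse)
  moreover have "outer_prod u v ** S = outer_prod u (v v* S)"
    by (rule outer_prod_matrix_mul)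
  ultimately have "(M + outer_prod u v) ** (S - c *\<^sub>R outer_prod (S *v u) (v v* S))
      = mat 1 + outer_prod u (v v* S)
        - c *\<^sub>R (outer_prod u (v v* S) + (v \<bullet> (S *v u)) *\<^sub>R outer_prod u (v v* S))"
    by (simp add: matrix_add_rdistrib matrix_diff_ldistrib matrix_mul_scaleR_right inverse
        outer_prod_mult_outer_prod)
  also have "\<dots> = mat 1 + (1 - c * (1 + v \<bullet> (S *v u))) *\<^sub>R outer_prod u (v v* S)"
    by (simp add: algebra_simps)
  also have "\<dots> = mat 1" using nonsingular by (simp add: c_def)
  finally show "(M + outer_prod u v) ** (S - c *\<^sub>R outer_prod (S *v u) (v v* S)) = mat 1" .
qed

subsection \<open>Positive definite matrices\<close>

definition pos_semidef :: "real^'n^'n \<Rightarrow> bool" where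
  "pos_semidef M \<longleftrightarrow> (\<forall>x. 0 \<le> x \<bullet> (M *v x))"

definition pos_def :: "real^'n^'n \<Rightarrow> bool" where
  "pos_def M \<longleftrightarrow> (\<forall>x. x \<noteq> 0 \<longrightarrow> 0 < x \<bullet> (M *v x))"

lemma pos_def_imp_pos_semidef: "pos_def M \<Longrightarrow> pos_semidef M"
  unfolding pos_def_def pos_semidef_def by (metis inner_zero_left order.refl less_imp_le)

lemma quadratic_form_diagonal:
  assumes "\<forall>c d. c \<noteq> d \<longrightarrow> D $ c $ d = 0"
  shows "x \<bullet> (D *v x) = (\<Sum>c\<in>UNIV. D $ c $ c * (x $ c)\<^sup>2)"
proof -
  have "(\<Sum>d\<in>UNIV. D $ c $ d * x $ d) = (\<Sum>d\<in>UNIV. if d = c then D $ c $ c * x $ c else 0)"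
    for c by (rule sum.cong) (use assms in auto)
  then have "D *v x = (\<chi> c. D $ c $ c * x $ c)"
    by (simp add: vec_eq_iff matrix_vector_mult_def)
  then show ?thesis by (simp add: inner_vec_def power2_eq_square mult_ac)
qed

lemma pos_semidef_diagonal:
  assumes "\<forall>c d. c \<noteq> d \<longrightarrow> D $ c $ d = 0" and "\<forall>c. 0 \<le> D $ c $ c"
  shows "pos_semidef D"
  unfolding pos_semidef_def quadratic_form_diagonal [OF assms(1)]
  using assms(2) by (simp add: sum_nonneg)

lemma pos_def_diagonal:
  assumes "\<forall>c d. c \<noteq> d \<longrightarrow> D $ c $ d = 0" and "\<forall>c. 0 < D $ c $ c"
  shows "pos_def D"
  unfolding pos_def_def quadratic_form_diagonal [OF assms(1)]
proof (intro allI impI)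
  fix x :: "real^'a" assume "x \<noteq> 0"
  then obtain c where "x $ c \<noteq> 0" by (metis vec_eq_iff zero_index)
  then show "0 < (\<Sum>c\<in>UNIV. D $ c $ c * (x $ c)\<^sup>2)"
    using assms(2) by (intro sum_pos2 [where i=c]) (auto intro!: mult_nonneg_nonneg simp: less_imp_le)
qed

lemma pos_def_imp_invertible:
  assumes "pos_def M"
  shows "invertible M"
proof -
  have "\<forall>x. M *v x = 0 \<longrightarrow> x = 0" using assms unfolding pos_def_def by force
  then show ?thesis
    using matrix_left_invertible_ker invertible_left_inverse by blast
qed

lemma pos_def_matrix_inv:
  fixes M :: "real^'n^'n"
  assumes "pos_def M"
  shows "pos_def (matrix_inv M)"
  unfolding pos_def_def
proof (intro allI impI)
  fix x :: "real^'n" assume "x \<noteq> 0"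
  define y where "y = matrix_inv M *v x"
  have "M *v y = x"
    using matrix_mul_matrix_inv [OF pos_def_imp_invertible [OF assms]]
    by (simp add: y_def matrix_vector_mul_assoc)
  with \<open>x \<noteq> 0\<close> have "y \<noteq> 0" by auto
  then have "0 < y \<bullet> (M *v y)" using assms unfolding pos_def_def by blast
  with \<open>M *v y = x\<close> show "0 < x \<bullet> (matrix_inv M *v x)"
    by (simp add: y_def inner_commute)
qed

lemma pos_def_add: "pos_semidef N \<Longrightarrow> pos_def G \<Longrightarrow> pos_def (N + G)"
  unfolding pos_def_def pos_semidef_def
  by (simp add: matrix_vector_mult_add_rdistrib inner_add_right add_nonneg_pos)

lemma pos_semidef_scaleR: "0 \<le> c \<Longrightarrow> pos_semidef N \<Longrightarrow> pos_semidef (c *\<^sub>R N)"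
  unfolding pos_semidef_def
  by (simp flip: matrix_scaleR_vector_ac add: matrix_vector_mult_scaleR)

lemma pos_semidef_congruence:
  assumes "pos_semidef D"
  shows "pos_semidef (transpose A ** D ** A)"
  unfolding pos_semidef_def
proof
  fix x
  have "x \<bullet> ((transpose A ** D ** A) *v x) = x \<bullet> ((D *v (A *v x)) v* A)"
    by (simp flip: matrix_vector_mul_assoc)
  also have "\<dots> = (A *v x) \<bullet> (D *v (A *v x))"
    by (metis dot_lmul_matrix inner_commute)
  finally have "x \<bullet> ((transpose A ** D ** A) *v x) = (A *v x) \<bullet> (D *v (A *v x))" .
  then show "0 \<le> x \<bullet> ((transpose A ** D ** A) *v x)"
    using assms unfolding pos_semidef_def by simp
qed

subsection \<open>The posterior precision and covariance\<close>

lemma transpose_Pmat: "transpose (Pmat J) = Pmat J"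
  by (auto simp: vec_eq_iff transpose_def Pmat_def)

lemma pos_semidef_Pmat: "pos_semidef (Pmat J)"
  by (rule pos_semidef_diagonal) (auto simp: Pmat_def)

lemma Pmat_matrix_mul: "Pmat J ** A = (\<chi> k q. if k \<in> J then A $ k $ q else 0)"
proof -
  have "(\<Sum>l\<in>UNIV. (if k = l \<and> k \<in> J then 1 else 0) * A $ l $ q)
      = (\<Sum>l\<in>UNIV. if l = k then (if k \<in> J then A $ k $ q else 0) else 0)" for k q
    by (rule sum.cong) auto
  then show ?thesis by (simp add: vec_eq_iff matrix_matrix_mult_def Pmat_def)
qed

lemma transpose_Pmat_Gram_insert:
  assumes "i \<notin> J"
  shows "transpose A ** Pmat (insert i J) ** A
       = transpose A ** Pmat J ** A + outer_prod (A $ i) (A $ i)"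
proof -
  have "(transpose A ** Pmat J ** A) $ p $ q = (\<Sum>k\<in>J. A $ k $ p * A $ k $ q)" for J p q
    unfolding matrix_mul_assoc [symmetric] Pmat_matrix_mul
    by (simp add: matrix_matrix_mult_def transpose_def if_distrib sum.If_cases)
  then show ?thesis using assms by (simp add: vec_eq_iff outer_prod_def)
qed

text \<open>\<open>G\<close> stands for the prior precision \<open>\<Gamma>\<^sup>-\<^sup>1\<close>.\<close>

definition posterior_precision ::
    "real^'c^'n \<Rightarrow> real \<Rightarrow> real^'c^'c \<Rightarrow> 'n set \<Rightarrow> real^'c^'c" where
  "posterior_precision A \<sigma>2 G J = (1 / \<sigma>2) *\<^sub>R (transpose A ** Pmat J ** A) + G"

lemma posterior_precision_insert:
  "i \<notin> J \<Longrightarrow> posterior_precision A \<sigma>2 G (insert i J)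
     = posterior_precision A \<sigma>2 G J + outer_prod (A $ i) ((1 / \<sigma>2) *\<^sub>R A $ i)"
  by (simp add: posterior_precision_def transpose_Pmat_Gram_insert outer_prod_scaleR_right
      algebra_simps)

lemma transpose_posterior_precision:
  "transpose G = G \<Longrightarrow> transpose (posterior_precision A \<sigma>2 G J) = posterior_precision A \<sigma>2 G J"
  by (simp add: posterior_precision_def transpose_add transpose_scalar matrix_transpose_mul
      matrix_mul_assoc transpose_Pmat)

lemma pos_def_posterior_precision:
  "0 < \<sigma>2 \<Longrightarrow> pos_def G \<Longrightarrow> pos_def (posterior_precision A \<sigma>2 G J)"
  unfolding posterior_precision_def
  by (intro pos_def_add pos_semidef_scaleR pos_semidef_congruence pos_semidef_Pmat) simp_all

lemma trace_posterior_covariance_insert: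
  fixes A :: "real^'c^'n"
  assumes "0 < \<sigma>2" and "transpose G = G" and "pos_def G" and "i \<notin> J"
  defines "S \<equiv> matrix_inv (posterior_precision A \<sigma>2 G J)"
  defines "w \<equiv> S *v (A $ i)"
  shows "trace (A ** matrix_inv (posterior_precision A \<sigma>2 G (insert i J)) ** transpose A)
       = trace (A ** S ** transpose A) - (A *v w) \<bullet> (A *v w) / (\<sigma>2 + A $ i \<bullet> w)"
proof -
  let ?M = "posterior_precision A \<sigma>2 G J"
  let ?c = "1 / (\<sigma>2 + A $ i \<bullet> w)"
  have "pos_def ?M" using assms(1,3) by (rule pos_def_posterior_precision)
  then have inverse: "?M ** S = mat 1" and "transpose S = S" and "pos_def S"
    using matrix_mul_matrix_inv pos_def_imp_invertible transpose_matrix_inv_symmetric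
      transpose_posterior_precision [OF assms(2)] pos_def_matrix_inv
    unfolding S_def by blast+
  then have "0 \<le> A $ i \<bullet> w"
    using pos_def_imp_pos_semidef unfolding pos_semidef_def w_def by blast
  then have denominator: "1 + ((1 / \<sigma>2) *\<^sub>R A $ i) \<bullet> (S *v A $ i) = (\<sigma>2 + A $ i \<bullet> w) / \<sigma>2"
    and "0 < \<sigma>2 + A $ i \<bullet> w"
    using assms(1) by (simp_all add: w_def field_simps)
  have "((1 / \<sigma>2) *\<^sub>R A $ i) v* S = (1 / \<sigma>2) *\<^sub>R w"
    by (metis \<open>transpose S = S\<close> transpose_matrix_vector matrix_vector_mult_scaleR w_def)
  have "matrix_inv (posterior_precision A \<sigma>2 G (insert i J))
      = matrix_inv (?M + outer_prod (A $ i) ((1 / \<sigma>2) *\<^sub>R A $ i))"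
    by (simp only: posterior_precision_insert [OF assms(4)])
  also have "\<dots> = S - (1 / (1 + ((1 / \<sigma>2) *\<^sub>R A $ i) \<bullet> (S *v A $ i)))
      *\<^sub>R outer_prod (S *v A $ i) (((1 / \<sigma>2) *\<^sub>R A $ i) v* S)"
    using denominator \<open>0 < \<sigma>2 + A $ i \<bullet> w\<close> assms(1)
    by (intro matrix_inv_add_outer_prod [OF inverse]) simp
  also have "\<dots> = S - ?c *\<^sub>R outer_prod w w"
    using assms(1) unfolding denominator \<open>((1 / \<sigma>2) *\<^sub>R A $ i) v* S = (1 / \<sigma>2) *\<^sub>R w\<close>
    by (simp add: outer_prod_scaleR_right w_def [symmetric])
  finally show ?thesis
    by (simp add: matrix_diff_ldistrib matrix_diff_rdistrib matrix_mul_scaleR_right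
        scalar_matrix_assoc [symmetric] trace_sub trace_scaleR trace_congruence_outer_prod)
qed

lemma trace_posterior_covariance_insert_less:
  fixes A :: "real^'c^'n"
  assumes "0 < \<sigma>2" and "transpose G = G" and "pos_def G" and "i \<notin> J" and "A $ i \<noteq> 0"
  shows "trace (A ** matrix_inv (posterior_precision A \<sigma>2 G (insert i J)) ** transpose A)
       < trace (A ** matrix_inv (posterior_precision A \<sigma>2 G J) ** transpose A)"
proof -
  define w where "w = matrix_inv (posterior_precision A \<sigma>2 G J) *v (A $ i)"
  have "pos_def (matrix_inv (posterior_precision A \<sigma>2 G J))"
    using assms(1,3) by (intro pos_def_matrix_inv pos_def_posterior_precision)
  then have "0 < A $ i \<bullet> w" using assms(5) unfolding pos_def_def w_def by blast
  moreover have "(A *v w) $ i = A $ i \<bullet> w" by (simp add: matrix_vector_mul_component)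
  ultimately have "0 < (A *v w) \<bullet> (A *v w)" by (metis inner_gt_zero_iff less_irrefl zero_index)
  with \<open>0 < A $ i \<bullet> w\<close> show ?thesis
    using trace_posterior_covariance_insert [OF assms(1-4)] assms(1)
    by (simp add: w_def)
qed

subsection \<open>Weak submodularity\<close>

lemma marginal_nonneg_imp_mono:
  assumes "finite \<Omega>" and marginal_nonneg: "\<And>X i. X \<subseteq> \<Omega> \<Longrightarrow> i \<in> \<Omega> - X \<Longrightarrow> 0 \<le> marginal f i X"
    and "X \<subseteq> Y" and "Y \<subseteq> \<Omega>"
  shows "f X \<le> f Y"
proof -
  have "f X \<le> f (X \<union> F)" if "finite F" "X \<union> F \<subseteq> \<Omega>" for F
    using that
  proof (induction F rule: finite_induct)
    case empty
    then show ?case by simp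
  next
    case (insert j F)
    show ?case
    proof (cases "j \<in> X \<union> F")
      case True
      then show ?thesis using insert by (simp add: insert_absorb)
    next
      case False
      then have "0 \<le> marginal f j (X \<union> F)" using insert.prems by (intro marginal_nonneg) auto
      then show ?thesis using insert by (simp add: marginal_def)
    qed
  qed
  moreover have "finite (Y - X)" using assms(1,4) finite_subset by blast
  moreover have "X \<union> (Y - X) = Y" using assms(3) by blast
  ultimately show ?thesis using assms(4) by metis
qed

lemma weakly_submodular_if_marginal_pos:
  assumes "finite \<Omega>" and marginal_pos: "\<And>X i. X \<subseteq> \<Omega> \<Longrightarrow> i \<in> \<Omega> - X \<Longrightarrow> 0 < marginal f i X"
  shows "weakly_submodular \<Omega> f"
proof -
  let ?ratio = "\<lambda>(X, Y, i). marginal f i Y / marginal f i X"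
  have "wsm_triples \<Omega> \<subseteq> Pow \<Omega> \<times> Pow \<Omega> \<times> \<Omega>" by (auto simp: wsm_triples_def)
  then have "finite (wsm_triples \<Omega>)" by (rule finite_subset) (simp add: assms(1))
  then have "bdd_above (?ratio ` wsm_triples \<Omega>)" by (intro bdd_above_finite finite_imageI)
  then obtain c where "\<forall>r \<in> ?ratio ` wsm_triples \<Omega>. r \<le> c" unfolding bdd_above_def by blast
  then have "\<forall>(X, Y, i) \<in> wsm_triples \<Omega>. marginal f i Y / marginal f i X \<le> c" by fastforce
  then have bounded: "\<exists>c. \<forall>(X, Y, i) \<in> wsm_triples \<Omega>. marginal f i Y / marginal f i X \<le> c" by blast
  have "marginal f i X \<noteq> 0" if "(X, Y, i) \<in> wsm_triples \<Omega>" for X Y i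
  proof -
    have "X \<subseteq> \<Omega>" and "i \<in> \<Omega> - X" using that unfolding wsm_triples_def by auto
    then show ?thesis using marginal_pos [of X i] by simp
  qed
  then have "\<forall>(X, Y, i) \<in> wsm_triples \<Omega>. marginal f i X \<noteq> 0" by blast
  moreover have "f X \<le> f Y" if "X \<subseteq> Y" "Y \<subseteq> \<Omega>" for X Y
  proof (rule marginal_nonneg_imp_mono [OF assms(1) _ that])
    fix X i assume "X \<subseteq> \<Omega>" "i \<in> \<Omega> - X"
    then show "0 \<le> marginal f i X" using marginal_pos [of X i] by simp
  qed
  ultimately show ?thesis unfolding weakly_submodular_def using bounded by blast
qed

lemma transpose_Gamma: "transpose (Gamma \<alpha>0 \<alpha>) = Gamma \<alpha>0 \<alpha>"
  by (simp add: vec_eq_iff transpose_def Gamma_def)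

lemma pos_def_Gamma: "0 < \<alpha>0 \<Longrightarrow> \<forall>m. 0 < \<alpha> m \<Longrightarrow> pos_def (Gamma \<alpha>0 \<alpha>)"
  by (rule pos_def_diagonal) (auto simp: Gamma_def split: sum.split)

lemma Amat_row_nonzero: "Amat t fr $ k \<noteq> 0"
proof
  assume "Amat t fr $ k = 0"
  then have "Amat t fr $ k $ Inl () = 0" by simp
  then show False by (simp add: Amat_def)
qed

lemma marginal_fobj:
  "marginal (fobj t fr \<sigma>2 \<alpha>0 \<alpha>) i J
   = trace (Amat t fr ** matrix_inv (posterior_precision (Amat t fr) \<sigma>2 (matrix_inv (Gamma \<alpha>0 \<alpha>)) J)
        ** transpose (Amat t fr))
   - trace (Amat t fr ** matrix_inv (posterior_precision (Amat t fr) \<sigma>2 (matrix_inv (Gamma \<alpha>0 \<alpha>)) (insert i J))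
        ** transpose (Amat t fr))"
  by (simp add: marginal_def fobj_def posterior_precision_def trace_add)

theorem theorem1:
  fixes t :: "'n::finite \<Rightarrow> real" and fr :: "'m::finite \<Rightarrow> real"
    and \<sigma>2 :: real and \<alpha>0 :: real and \<alpha> :: "'m \<Rightarrow> real"
  assumes "\<sigma>2 > 0" and "\<alpha>0 > 0" and "\<forall>m. \<alpha> m > 0"
  shows "weakly_submodular (UNIV :: 'n set) (fobj t fr \<sigma>2 \<alpha>0 \<alpha>)"
proof (rule weakly_submodular_if_marginal_pos)
  let ?G = "matrix_inv (Gamma \<alpha>0 \<alpha>)"
  have "pos_def (Gamma \<alpha>0 \<alpha>)" using assms(2,3) by (rule pos_def_Gamma)
  then have "pos_def ?G" and "transpose ?G = ?G"
    using pos_def_matrix_inv transpose_matrix_inv_symmetric transpose_Gamma pos_def_imp_invertible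
    by blast+
  then show "0 < marginal (fobj t fr \<sigma>2 \<alpha>0 \<alpha>) i X" if "i \<in> UNIV - X" for X i
    using trace_posterior_covariance_insert_less [OF assms(1), of ?G i X "Amat t fr"] that
    by (simp add: marginal_fobj Amat_row_nonzero)
qed simp

end
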